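(* If $L\subseteq\Sigma^\omega$ is RPBA-recognizable, then there are finitely many Parikh-recognizable languages $U_1,\dots,U_n\subseteq\Sigma^*$ and regular languages $V_1,\dots,V_n\subseteq\Sigma^*$ with $L=\bigcup_{i=1}^nU_iV_i^\omega$.
   Context: For $V\subseteq\Sigma^*$, $V^\omega=\{w_1w_2\cdots\mid w_i\in V\setminus\{\varepsilon\}\}$. A semi-linear set in $\mathbb{N}^d$ is a finite union of sets $\{b_0+\sum_{j=1}^\ell b_jz_j\mid z_j\in\mathbb{N}\}$ with $b_j\in\mathbb{N}^d$. A Parikh automaton (PA) of dimension $d$ is $(Q,\Sigma,q_0,\Delta,F,C)$ with finite $Q$, $q_0\in Q$, $F\subseteq Q$, finite $\Delta\subseteq Q\times\Sigma\times\mathbb{N}^d\times Q$, semi-linear $C\subseteq\mathbb{N}^d$; it accepts a finite word $x_1\cdots x_n$ if there is a run $r_i=(p_{i-1},x_i,\mathbf{v}_i,p_i)\in\Delta$, $p_0=q_0$, with $p_n\in F$ and $\sum_i\mathbf{v}_i\in C$; Parikh-recognizable languages are those accepted by PA. A reachability Parikh–Büchi automaton (RPBA) is a PA read on infinite words: a run $r_1r_2\cdots$ ($r_i=(p_{i-1},\alpha_i,\mathbf{v}_i,p_i)\in\Delta$, $p_0=q_0$) is accepting if there is $i\ge1$ with $p_i\in F$ and $\sum_{k\le i}\mathbf{v}_k\in C$, and there are infinitely many $j$ with $p_j\in F$. $L$ is RPBA-recognizable if it is the set of infinite words with an accepting run of some RPBA. *)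

theory Defs
  imports Main
begin

text \<open>Finite words are lists; infinite words are functions nat => 'a.
  Vectors in N^d are nat lists of length d.\<close>

type_synonym 'a oword = "nat \<Rightarrow> 'a"

definition vadd :: "nat list \<Rightarrow> nat list \<Rightarrow> nat list" where
  "vadd u v = map2 (+) u v"

definition smult :: "nat \<Rightarrow> nat list \<Rightarrow> nat list" where
  "smult k v = map ((*) k) v"

definition vsum :: "nat \<Rightarrow> nat list list \<Rightarrow> nat list" where
  "vsum d vs = foldr vadd vs (replicate d 0)"

definition linear_set :: "nat \<Rightarrow> nat list \<Rightarrow> nat list list \<Rightarrow> nat list set" where
  "linear_set d b0 Ps =
     {vadd b0 (vsum d (map2 smult zs Ps)) | zs. length zs = length Ps}"

definition semilinear :: "nat \<Rightarrow> nat list set \<Rightarrow> bool" where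
  "semilinear d C \<longleftrightarrow>
     (\<exists>S. finite S \<and>
        (\<forall>(b0, Ps) \<in> S. length b0 = d \<and> (\<forall>p \<in> set Ps. length p = d)) \<and>
        C = (\<Union>(b0, Ps) \<in> S. linear_set d b0 Ps))"

record 'a pa =
  pa_dim    :: nat
  pa_states :: "nat set"
  pa_init   :: nat
  pa_trans  :: "(nat \<times> 'a \<times> nat list \<times> nat) set"
  pa_final  :: "nat set"
  pa_constr :: "nat list set"

definition wf_pa :: "'a pa \<Rightarrow> bool" where
  "wf_pa A \<longleftrightarrow>
     finite (pa_states A) \<and> pa_init A \<in> pa_states A \<and>
     pa_final A \<subseteq> pa_states A \<and> finite (pa_trans A) \<and>
     (\<forall>(p, a, v, q) \<in> pa_trans A. p \<in> pa_states A \<and> q \<in> pa_states A \<and> length v = pa_dim A) \<and>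
     semilinear (pa_dim A) (pa_constr A)"

definition pa_accepts :: "'a pa \<Rightarrow> 'a list \<Rightarrow> bool" where
  "pa_accepts A w \<longleftrightarrow>
     (\<exists>p vs. p 0 = pa_init A \<and>
        (\<forall>i < length w. (p i, w ! i, vs i, p (Suc i)) \<in> pa_trans A) \<and>
        p (length w) \<in> pa_final A \<and>
        vsum (pa_dim A) (map vs [0..<length w]) \<in> pa_constr A)"

definition pa_lang :: "'a pa \<Rightarrow> 'a list set" where
  "pa_lang A = {w. pa_accepts A w}"

definition parikh_recognizable :: "'a list set \<Rightarrow> bool" where
  "parikh_recognizable U \<longleftrightarrow> (\<exists>A. wf_pa A \<and> pa_lang A = U)"

definition rpba_accepts :: "'a pa \<Rightarrow> 'a oword \<Rightarrow> bool" where
  "rpba_accepts A \<alpha> \<longleftrightarrow>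
     (\<exists>p vs. p 0 = pa_init A \<and>
        (\<forall>i. (p i, \<alpha> i, vs i, p (Suc i)) \<in> pa_trans A) \<and>
        (\<exists>i \<ge> 1. p i \<in> pa_final A \<and> vsum (pa_dim A) (map vs [0..<i]) \<in> pa_constr A) \<and>
        (\<exists>\<^sub>\<infinity>j. p j \<in> pa_final A))"

definition rpba_lang :: "'a pa \<Rightarrow> 'a oword set" where
  "rpba_lang A = {\<alpha>. rpba_accepts A \<alpha>}"

definition rpba_recognizable :: "'a oword set \<Rightarrow> bool" where
  "rpba_recognizable L \<longleftrightarrow> (\<exists>A. wf_pa A \<and> rpba_lang A = L)"

definition regular :: "'a list set \<Rightarrow> bool" where
  "regular V \<longleftrightarrow>
     (\<exists>(Q :: nat set) q0 (\<delta> :: (nat \<times> 'a \<times> nat) set) F.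
        finite Q \<and> q0 \<in> Q \<and> F \<subseteq> Q \<and> finite \<delta> \<and>
        (\<forall>(p, a, q) \<in> \<delta>. p \<in> Q \<and> q \<in> Q) \<and>
        V = {w. \<exists>p. p 0 = q0 \<and> (\<forall>i < length w. (p i, w ! i, p (Suc i)) \<in> \<delta>) \<and>
                    p (length w) \<in> F})"

text \<open>V^omega = { w1 w2 ... | w_i in V - {epsilon} }.\<close>
definition omega_iter :: "'a list set \<Rightarrow> 'a oword set" where
  "omega_iter V =
     {\<alpha>. \<exists>ws :: nat \<Rightarrow> 'a list. (\<forall>i. ws i \<in> V \<and> ws i \<noteq> []) \<and>
        (\<forall>n. map \<alpha> [0..<sum_list (map (length \<circ> ws) [0..<n])] = concat (map ws [0..<n]))}"

definition conc_ow :: "'a list \<Rightarrow> 'a oword \<Rightarrow> 'a oword" where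
  "conc_ow u \<alpha> = (\<lambda>n. if n < length u then u ! n else \<alpha> (n - length u))"

definition lang_conc :: "'a list set \<Rightarrow> 'a oword set \<Rightarrow> 'a oword set" where
  "lang_conc U W = {conc_ow u \<alpha> | u \<alpha>. u \<in> U \<and> \<alpha> \<in> W}"

end

theory Submission
  imports Defs "HOL-Library.Infinite_Set"
begin

(* An accepting run of the RPBA satisfies the constraint at some position i in a final
   state and, by pigeonhole, visits one final state f infinitely often after i. Cutting
   the word at these visits writes it as u w1 w2 ..., where u is read from the initial
   state to f while passing the constraint check, and each w_k is a nonempty loop from f
   to f in the underlying finite automaton. Conversely such a factorisation glues back
   into an accepting run. The loops at f form a regular language, and the admissible
   prefixes u are Parikh-recognisable: a PA simulates A, freezes its counters when it
   decides to enter a final state, and finally checks the constraint on the frozen sum. *)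

lemma vsum_append_zeros: "vsum d (xs @ replicate m (replicate d 0)) = vsum d xs"
proof -
  have "foldr vadd (replicate m (replicate d 0)) (replicate d 0) = replicate d 0"
    by (induction m) (auto simp: vadd_def)
  then show ?thesis unfolding vsum_def by simp
qed

lemma map_upt_append:
  "i \<le> j \<Longrightarrow> j \<le> k \<Longrightarrow> map f [i..<j] @ map f [j..<k] = map f [i..<k]"
  using upt_add_eq_append[of i j "k - j"] by simp

lemma conc_ow_take_drop: "conc_ow (map \<alpha> [0..<m]) (\<lambda>n. \<alpha> (m + n)) = \<alpha>"
  by (rule ext) (simp add: conc_ow_def)

lemma conc_ow_in_lang_conc: "u \<in> U \<Longrightarrow> \<beta> \<in> W \<Longrightarrow> conc_ow u \<beta> \<in> lang_conc U W"
  unfolding lang_conc_def by blast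

lemma omega_iter_iff_factorization:
  "\<beta> \<in> omega_iter V \<longleftrightarrow>
     (\<exists>s. strict_mono s \<and> s 0 = 0 \<and> (\<forall>k. map \<beta> [s k..<s (Suc k)] \<in> V))"
proof
  assume "\<beta> \<in> omega_iter V"
  then obtain ws where ws: "\<And>k. ws k \<in> V \<and> ws k \<noteq> []"
    and prefix: "\<And>n. map \<beta> [0..<sum_list (map (length \<circ> ws) [0..<n])] = concat (map ws [0..<n])"
    unfolding omega_iter_def by blast
  define s where "s k = sum_list (map (length \<circ> ws) [0..<k])" for k
  have s_Suc: "s (Suc k) = s k + length (ws k)" for k
    by (simp add: s_def)
  have "map \<beta> [s k..<s (Suc k)] = ws k" for k
  proof -
    have "map \<beta> [0..<s k] @ map \<beta> [s k..<s (Suc k)] = map \<beta> [0..<s (Suc k)]"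
      by (simp add: s_Suc map_upt_append)
    then show ?thesis
      using prefix[of k] prefix[of "Suc k"] by (simp add: s_def)
  qed
  moreover have "strict_mono s"
    using ws by (simp add: strict_mono_Suc_iff s_Suc)
  ultimately show "\<exists>s. strict_mono s \<and> s 0 = 0 \<and> (\<forall>k. map \<beta> [s k..<s (Suc k)] \<in> V)"
    using ws by (intro exI[of _ s]) (simp add: s_def)
next
  assume "\<exists>s. strict_mono s \<and> s 0 = 0 \<and> (\<forall>k. map \<beta> [s k..<s (Suc k)] \<in> V)"
  then obtain s where s: "strict_mono s" "s 0 = 0" and factors: "\<And>k. map \<beta> [s k..<s (Suc k)] \<in> V"
    by blast
  define ws where "ws k = map \<beta> [s k..<s (Suc k)]" for k
  have s_le: "s k \<le> s (Suc k)" for k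
    using s(1) by (simp add: strict_mono_less_eq)
  have "sum_list (map (length \<circ> ws) [0..<n]) = s n \<and> concat (map ws [0..<n]) = map \<beta> [0..<s n]" for n
  proof (induction n)
    case (Suc n)
    then show ?case
      using s_le[of n] by (simp add: ws_def map_upt_append)
  qed (simp add: s(2))
  moreover have "ws k \<in> V \<and> ws k \<noteq> []" for k
    using factors[of k] strict_mono_less[OF s(1), of k "Suc k"] by (auto simp: ws_def)
  ultimately show "\<beta> \<in> omega_iter V"
    unfolding omega_iter_def by (intro CollectI exI[of _ ws]) simp
qed

lemma suffix_in_omega_iter:
  assumes "strict_mono j" and "\<And>k. map \<alpha> [j k..<j (Suc k)] \<in> V"
  shows "(\<lambda>n. \<alpha> (j 0 + n)) \<in> omega_iter V"
  unfolding omega_iter_iff_factorization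
proof (intro exI conjI allI)
  have j_ge: "j 0 \<le> j k" for k
    using assms(1) by (simp add: strict_mono_less_eq)
  show "strict_mono (\<lambda>k. j k - j 0)"
    using assms(1) j_ge by (simp add: strict_mono_def less_diff_iff)
  show "map (\<lambda>n. \<alpha> (j 0 + n)) [j k - j 0..<j (Suc k) - j 0] \<in> V" for k
  proof -
    have "map (\<lambda>n. \<alpha> (j 0 + n)) [j k - j 0..<j (Suc k) - j 0] = map \<alpha> [j k..<j (Suc k)]"
      using j_ge[of k] j_ge[of "Suc k"] by (intro nth_equalityI) auto
    then show ?thesis using assms(2) by simp
  qed
qed simp

lemma strict_mono_interval_index:
  fixes s :: "nat \<Rightarrow> nat"
  assumes mono: "strict_mono s" and "s 0 \<le> n"
  shows "\<exists>!k. s k \<le> n \<and> n < s (Suc k)"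
proof
  define m where "m = (LEAST k. n < s k)"
  have "n < s (Suc n)"
    using strict_mono_imp_increasing[OF mono, of "Suc n"] by simp
  then have m: "n < s m"
    unfolding m_def by (rule LeastI)
  then have "m \<noteq> 0"
    using \<open>s 0 \<le> n\<close> by (metis not_le)
  moreover have "s (m - 1) \<le> n"
    using \<open>m \<noteq> 0\<close> not_less_Least[of "m - 1" "\<lambda>k. n < s k"] unfolding m_def by simp
  ultimately show interval: "s (m - 1) \<le> n \<and> n < s (Suc (m - 1))"
    using m by simp
  show "k = m - 1" if "s k \<le> n \<and> n < s (Suc k)" for k
  proof (rule ccontr)
    assume "k \<noteq> m - 1"
    then consider "Suc k \<le> m - 1" | "Suc (m - 1) \<le> k" by linarith
    then show False
      using that interval strict_mono_less_eq[OF mono] by cases (metis leD le_less_trans)+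
  qed
qed

lemma INFM_in_finite_obtain_visits:
  assumes "finite F" and "\<exists>\<^sub>\<infinity>j. p j \<in> F"
  obtains f and visit :: "nat \<Rightarrow> nat" where "f \<in> F" and "strict_mono visit" and "\<forall>k. p (visit k) = f \<and> i \<le> visit k"
proof -
  have "\<exists>\<^sub>\<infinity>j. \<exists>f \<in> F. p j = f"
    using assms(2) by simp
  then obtain f where f: "f \<in> F" and visits_f: "\<exists>\<^sub>\<infinity>j. p j = f"
    unfolding INFM_finite_Bex_distrib[OF assms(1)] by blast
  have "\<exists>\<^sub>\<infinity>j. p j = f \<and> i \<le> j"
    using visits_f MOST_ge_nat by (rule INFM_conjI)
  then have infinite: "infinite {j. p j = f \<and> i \<le> j}"
    by (simp add: INFM_iff_infinite)
  show thesis
  proof (rule that[OF f])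
    show "strict_mono (enumerate {j. p j = f \<and> i \<le> j})"
      using strict_mono_enumerate[OF infinite] .
    show "\<forall>k. p (enumerate {j. p j = f \<and> i \<le> j} k) = f \<and> i \<le> enumerate {j. p j = f \<and> i \<le> j} k"
      using enumerate_in_set[OF infinite] by simp
  qed
qed

definition loop_lang :: "('q \<times> 'a \<times> 'q) set \<Rightarrow> 'q \<Rightarrow> 'a list set" where
  "loop_lang \<delta> q =
     {w. \<exists>r. r 0 = q \<and> r (length w) = q \<and> (\<forall>i<length w. (r i, w ! i, r (Suc i)) \<in> \<delta>)}"

lemma regular_loop_lang:
  fixes \<delta> :: "(nat \<times> 'a \<times> nat) set"
  assumes "finite \<delta>"
  shows "regular (loop_lang \<delta> q)"
  unfolding regular_def
proof (intro exI conjI)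
  let ?Q = "insert q (fst ` \<delta> \<union> (snd \<circ> snd) ` \<delta>)"
  show "finite ?Q" using assms by simp
  show "\<forall>(p, a, p') \<in> \<delta>. p \<in> ?Q \<and> p' \<in> ?Q" by force
  show "loop_lang \<delta> q = {w. \<exists>r. r 0 = q \<and> (\<forall>i<length w. (r i, w ! i, r (Suc i)) \<in> \<delta>) \<and> r (length w) \<in> {q}}"
    unfolding loop_lang_def by auto
qed (use assms in auto)

lemma loop_lang_segments_glue:
  assumes s: "strict_mono s" "s 0 = 0"
    and loops: "\<forall>k. map \<beta> [s k..<s (Suc k)] \<in> loop_lang \<delta> q"
  obtains r where "\<forall>k. r (s k) = q" and "\<forall>n. (r n, \<beta> n, r (Suc n)) \<in> \<delta>"
proof -
  have "\<exists>r. r 0 = q \<and> r (s (Suc k) - s k) = q \<and>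
          (\<forall>t < s (Suc k) - s k. (r t, \<beta> (s k + t), r (Suc t)) \<in> \<delta>)" for k
    using loops by (simp add: loop_lang_def)
  then obtain R where R0: "\<And>k. R k 0 = q" and R_end: "\<And>k. R k (s (Suc k) - s k) = q"
    and R_step: "\<And>k t. t < s (Suc k) - s k \<Longrightarrow> (R k t, \<beta> (s k + t), R k (Suc t)) \<in> \<delta>"
    by metis
  define idx where "idx n = (THE k. s k \<le> n \<and> n < s (Suc k))" for n
  have unique: "\<exists>!k. s k \<le> n \<and> n < s (Suc k)" for n
    using strict_mono_interval_index[OF s(1)] s(2) by simp
  have idx_eq: "idx n = k" if "s k \<le> n" "n < s (Suc k)" for n k
    unfolding idx_def using that by (intro the1_equality[OF unique]) simp
  have idx_bounds: "s (idx n) \<le> n \<and> n < s (Suc (idx n))" for n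
    unfolding idx_def by (rule theI'[OF unique])
  define r where "r n = R (idx n) (n - s (idx n))" for n
  have "r (s k) = q" for k
    using idx_eq[of k "s k"] strict_mono_less[OF s(1), of k "Suc k"] R0 by (simp add: r_def)
  moreover have "(r n, \<beta> n, r (Suc n)) \<in> \<delta>" for n
  proof -
    define k where "k = idx n"
    have k: "s k \<le> n" "n < s (Suc k)" using idx_bounds[of n] by (simp_all add: k_def)
    have "r (Suc n) = R k (Suc (n - s k))"
    proof (cases "Suc n < s (Suc k)")
      case True
      then show ?thesis using idx_eq[of k "Suc n"] k by (simp add: r_def Suc_diff_le)
    next
      case False
      then have "Suc n = s (Suc k)" using k by simp
      moreover have "Suc (n - s k) = s (Suc k) - s k" using calculation k(1) by linarith
      ultimately show ?thesis
        using idx_eq[of "Suc k" "Suc n"] strict_mono_less[OF s(1), of "Suc k" "Suc (Suc k)"] R0 R_end[of k]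
        by (simp add: r_def)
    qed
    then show ?thesis
      using R_step[of "n - s k" k] k by (simp add: r_def k_def [symmetric])
  qed
  ultimately show ?thesis using that by blast
qed

definition nfa_trans :: "'a pa \<Rightarrow> (nat \<times> 'a \<times> nat) set" where
  "nfa_trans A = (\<lambda>(p, a, v, q). (p, a, q)) ` pa_trans A"

lemma nfa_trans_iff: "(p, a, q) \<in> nfa_trans A \<longleftrightarrow> (\<exists>v. (p, a, v, q) \<in> pa_trans A)"
  by (force simp: nfa_trans_def)

lemma regular_loop_lang_nfa_trans: "wf_pa A \<Longrightarrow> regular (loop_lang (nfa_trans A) f)"
  unfolding wf_pa_def nfa_trans_def by (intro regular_loop_lang) simp

definition rpba_prefix_lang :: "'a pa \<Rightarrow> nat \<Rightarrow> 'a list set" where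
  "rpba_prefix_lang A f =
     {u. \<exists>p vs i. p 0 = pa_init A \<and>
        (\<forall>k<length u. (p k, u ! k, vs k, p (Suc k)) \<in> pa_trans A) \<and> p (length u) = f \<and>
        1 \<le> i \<and> i \<le> length u \<and> p i \<in> pa_final A \<and>
        vsum (pa_dim A) (map vs [0..<i]) \<in> pa_constr A}"

lemma rpba_accepts_imp_decomposition:
  assumes "finite (pa_final A)" and "rpba_accepts A \<alpha>"
  shows "\<exists>f \<in> pa_final A.
           \<alpha> \<in> lang_conc (rpba_prefix_lang A f) (omega_iter (loop_lang (nfa_trans A) f))"
proof -
  obtain p vs i where p0: "p 0 = pa_init A"
    and step: "\<And>k. (p k, \<alpha> k, vs k, p (Suc k)) \<in> pa_trans A"
    and i: "i \<ge> 1" "p i \<in> pa_final A" "vsum (pa_dim A) (map vs [0..<i]) \<in> pa_constr A"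
    and final_infinitely: "\<exists>\<^sub>\<infinity>j. p j \<in> pa_final A"
    using assms(2) unfolding rpba_accepts_def by blast
  obtain f and visit :: "nat \<Rightarrow> nat" where f: "f \<in> pa_final A" and mono: "strict_mono visit"
    and visit: "\<forall>k. p (visit k) = f \<and> i \<le> visit k"
    using INFM_in_finite_obtain_visits[OF assms(1) final_infinitely, where i = i] .
  have "map \<alpha> [0..<visit 0] \<in> rpba_prefix_lang A f"
    unfolding rpba_prefix_lang_def using p0 step i visit
    by (intro CollectI exI[of _ p] exI[of _ vs] exI[of _ i]) simp
  moreover have "map \<alpha> [visit k..<visit (Suc k)] \<in> loop_lang (nfa_trans A) f" for k
    unfolding loop_lang_def
  proof (intro CollectI exI[of _ "\<lambda>t. p (visit k + t)"] conjI allI impI)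
    have "visit k \<le> visit (Suc k)"
      using mono by (simp add: strict_mono_less_eq)
    then show "p (visit k + length (map \<alpha> [visit k..<visit (Suc k)])) = f"
      using visit by simp
    show "(p (visit k + t), map \<alpha> [visit k..<visit (Suc k)] ! t, p (visit k + Suc t)) \<in> nfa_trans A"
      if "t < length (map \<alpha> [visit k..<visit (Suc k)])" for t
      using that step[of "visit k + t"] nfa_trans_iff by fastforce
  qed (simp add: visit)
  then have "(\<lambda>n. \<alpha> (visit 0 + n)) \<in> omega_iter (loop_lang (nfa_trans A) f)"
    by (rule suffix_in_omega_iter[OF mono])
  ultimately have "conc_ow (map \<alpha> [0..<visit 0]) (\<lambda>n. \<alpha> (visit 0 + n))
      \<in> lang_conc (rpba_prefix_lang A f) (omega_iter (loop_lang (nfa_trans A) f))"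
    by (rule conc_ow_in_lang_conc)
  then show ?thesis
    using f unfolding conc_ow_take_drop by blast
qed

lemma pa_run_conc_ow:
  assumes prefix: "\<And>k. k < length u \<Longrightarrow> (p k, u ! k, vs k, p (Suc k)) \<in> pa_trans A"
    and suffix: "\<forall>n. (r n, \<beta> n, r (Suc n)) \<in> nfa_trans A"
    and "p (length u) = r 0"
  obtains P VS where "\<forall>n. (P n, conc_ow u \<beta> n, VS n, P (Suc n)) \<in> pa_trans A"
    and "\<forall>n \<le> length u. P n = p n" and "\<forall>n < length u. VS n = vs n"
    and "\<forall>n. P (length u + n) = r n"
proof -
  define P where "P n = (if n \<le> length u then p n else r (n - length u))" for n
  have P_suffix: "P n = r (n - length u)" if "length u \<le> n" for n
    using that assms(3) by (simp add: P_def)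
  have "\<exists>v. (P n, conc_ow u \<beta> n, v, P (Suc n)) \<in> pa_trans A" if "length u \<le> n" for n
    using that suffix P_suffix[of n] P_suffix[of "Suc n"]
    by (simp add: conc_ow_def nfa_trans_iff Suc_diff_le)
  then obtain ws where ws: "\<And>n. length u \<le> n \<Longrightarrow> (P n, conc_ow u \<beta> n, ws n, P (Suc n)) \<in> pa_trans A"
    by metis
  define VS where "VS n = (if n < length u then vs n else ws n)" for n
  have "(P n, conc_ow u \<beta> n, VS n, P (Suc n)) \<in> pa_trans A" for n
    using prefix[of n] ws[of n] by (cases "n < length u") (simp_all add: P_def VS_def conc_ow_def)
  then have "\<forall>n. (P n, conc_ow u \<beta> n, VS n, P (Suc n)) \<in> pa_trans A" ..
  moreover have "\<forall>n \<le> length u. P n = p n" and "\<forall>n < length u. VS n = vs n"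
    by (simp_all add: P_def VS_def)
  moreover have "\<forall>n. P (length u + n) = r n"
    using P_suffix by simp
  ultimately show ?thesis
    by (rule that)
qed

lemma decomposition_imp_rpba_accepts:
  assumes "f \<in> pa_final A"
    and "\<alpha> \<in> lang_conc (rpba_prefix_lang A f) (omega_iter (loop_lang (nfa_trans A) f))"
  shows "rpba_accepts A \<alpha>"
proof -
  obtain u \<beta> where \<alpha>: "\<alpha> = conc_ow u \<beta>" and u: "u \<in> rpba_prefix_lang A f"
    and \<beta>: "\<beta> \<in> omega_iter (loop_lang (nfa_trans A) f)"
    using assms(2) unfolding lang_conc_def by blast
  obtain p vs i where p0: "p 0 = pa_init A"
    and prefix: "\<And>k. k < length u \<Longrightarrow> (p k, u ! k, vs k, p (Suc k)) \<in> pa_trans A"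
    and p_end: "p (length u) = f"
    and i: "1 \<le> i" "i \<le> length u" "p i \<in> pa_final A" "vsum (pa_dim A) (map vs [0..<i]) \<in> pa_constr A"
    using u unfolding rpba_prefix_lang_def by blast
  obtain s where s: "strict_mono s" "s 0 = 0"
    and loops: "\<forall>k. map \<beta> [s k..<s (Suc k)] \<in> loop_lang (nfa_trans A) f"
    using \<beta>[unfolded omega_iter_iff_factorization] by blast
  obtain r where r_visit: "\<forall>k. r (s k) = f" and suffix: "\<forall>n. (r n, \<beta> n, r (Suc n)) \<in> nfa_trans A"
    using loop_lang_segments_glue[OF s loops] .
  have "p (length u) = r 0"
    using p_end r_visit s(2) by metis
  then obtain P VS where run: "\<forall>n. (P n, \<alpha> n, VS n, P (Suc n)) \<in> pa_trans A"
    and P_prefix: "\<forall>n \<le> length u. P n = p n" and VS_prefix: "\<forall>n < length u. VS n = vs n"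
    and P_suffix: "\<forall>n. P (length u + n) = r n"
    unfolding \<alpha> using pa_run_conc_ow[OF prefix suffix] by blast
  have prefix_VS: "map VS [0..<i] = map vs [0..<i]"
    using i(2) VS_prefix by simp
  have "P i \<in> pa_final A \<and> vsum (pa_dim A) (map VS [0..<i]) \<in> pa_constr A"
    unfolding prefix_VS using i P_prefix by simp
  moreover have "\<exists>\<^sub>\<infinity>j. P j \<in> pa_final A"
    unfolding INFM_nat
  proof
    fix m
    have "m < length u + s (Suc m)"
      using strict_mono_imp_increasing[OF s(1), of "Suc m"] by simp
    then show "\<exists>j>m. P j \<in> pa_final A"
      using P_suffix r_visit assms(1) by metis
  qed
  ultimately show ?thesis
    unfolding rpba_accepts_def using run p0 P_prefix i(1) by (metis le0)
qed

lemma rpba_lang_decomposition: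
  assumes "finite (pa_final A)"
  shows "rpba_lang A =
    (\<Union>f \<in> pa_final A. lang_conc (rpba_prefix_lang A f) (omega_iter (loop_lang (nfa_trans A) f)))"
  using rpba_accepts_imp_decomposition[OF assms] decomposition_imp_rpba_accepts
  unfolding rpba_lang_def by blast

(* State 2q is q before the counters are frozen, state 2q + 1 is q afterwards; freezing is
   only possible on entering a final state. *)
definition prefix_pa_trans :: "'a pa \<Rightarrow> (nat \<times> 'a \<times> nat list \<times> nat) set" where
  "prefix_pa_trans A =
     (\<lambda>(p, a, v, q). (2 * p, a, v, 2 * q)) ` pa_trans A \<union>
     (\<lambda>(p, a, v, q). (2 * p, a, v, 2 * q + 1)) ` {(p, a, v, q) \<in> pa_trans A. q \<in> pa_final A} \<union>
     (\<lambda>(p, a, v, q). (2 * p + 1, a, replicate (pa_dim A) 0, 2 * q + 1)) ` pa_trans A"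

definition prefix_pa :: "'a pa \<Rightarrow> nat \<Rightarrow> 'a pa" where
  "prefix_pa A f =
     \<lparr>pa_dim = pa_dim A,
      pa_states = (\<lambda>p. 2 * p) ` pa_states A \<union> (\<lambda>p. 2 * p + 1) ` pa_states A,
      pa_init = 2 * pa_init A,
      pa_trans = prefix_pa_trans A,
      pa_final = {2 * f + 1},
      pa_constr = pa_constr A\<rparr>"

lemma prefix_pa_trans_iff:
  "(x, a, w, y) \<in> prefix_pa_trans A \<longleftrightarrow>
     (\<exists>p v q. (p, a, v, q) \<in> pa_trans A \<and>
        (x = 2 * p \<and> w = v \<and> y = 2 * q \<or>
         x = 2 * p \<and> w = v \<and> y = 2 * q + 1 \<and> q \<in> pa_final A \<or>
         x = 2 * p + 1 \<and> w = replicate (pa_dim A) 0 \<and> y = 2 * q + 1))"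
  unfolding prefix_pa_trans_def by (auto simp: image_iff; force)

lemma prefix_pa_transD:
  assumes "(x, a, w, y) \<in> prefix_pa_trans A"
  shows "\<exists>v. (x div 2, a, v, y div 2) \<in> pa_trans A"
    and "even x \<Longrightarrow> (x div 2, a, w, y div 2) \<in> pa_trans A"
    and "odd x \<Longrightarrow> odd y \<and> w = replicate (pa_dim A) 0"
    and "even x \<Longrightarrow> odd y \<Longrightarrow> y div 2 \<in> pa_final A"
  using assms unfolding prefix_pa_trans_iff by auto

lemma wf_prefix_pa:
  assumes "wf_pa A" and "f \<in> pa_states A"
  shows "wf_pa (prefix_pa A f)"
  unfolding wf_pa_def
proof (intro conjI)
  let ?B = "prefix_pa A f"
  show "\<forall>(x, a, w, y) \<in> pa_trans ?B. x \<in> pa_states ?B \<and> y \<in> pa_states ?B \<and> length w = pa_dim ?B"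
    using assms(1) unfolding wf_pa_def prefix_pa_def by (fastforce simp: prefix_pa_trans_iff)
  have "{(p, a, v, q) \<in> pa_trans A. q \<in> pa_final A} \<subseteq> pa_trans A"
    by auto
  then show "finite (pa_trans ?B)"
    using assms(1) finite_subset unfolding wf_pa_def prefix_pa_def prefix_pa_trans_def by auto
qed (use assms in \<open>auto simp: wf_pa_def prefix_pa_def\<close>)

lemma rpba_prefix_lang_subset_pa_lang: "rpba_prefix_lang A f \<subseteq> pa_lang (prefix_pa A f)"
proof
  fix u assume "u \<in> rpba_prefix_lang A f"
  then obtain p vs i where p0: "p 0 = pa_init A"
    and step: "\<And>k. k < length u \<Longrightarrow> (p k, u ! k, vs k, p (Suc k)) \<in> pa_trans A"
    and p_end: "p (length u) = f"
    and i: "1 \<le> i" "i \<le> length u" "p i \<in> pa_final A" "vsum (pa_dim A) (map vs [0..<i]) \<in> pa_constr A"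
    unfolding rpba_prefix_lang_def by blast
  define p' where "p' k = (if k < i then 2 * p k else 2 * p k + 1)" for k
  define vs' where "vs' k = (if k < i then vs k else replicate (pa_dim A) 0)" for k
  have "(p' k, u ! k, vs' k, p' (Suc k)) \<in> prefix_pa_trans A" if "k < length u" for k
    using step[OF that] i(1,3) unfolding prefix_pa_trans_iff p'_def vs'_def
    by (cases "Suc k < i"; cases "Suc k = i") auto
  moreover have "map vs' [0..<length u] = map vs [0..<i] @ replicate (length u - i) (replicate (pa_dim A) 0)"
  proof -
    have "map vs' [0..<length u] = map vs' [0..<i] @ map vs' [i..<length u]"
      using i(2) by (simp add: map_upt_append)
    moreover have "map vs' [i..<length u] = replicate (length u - i) (replicate (pa_dim A) 0)"
      by (rule nth_equalityI) (auto simp: vs'_def)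
    ultimately show ?thesis
      by (simp add: vs'_def)
  qed
  ultimately show "u \<in> pa_lang (prefix_pa A f)"
    unfolding pa_lang_def pa_accepts_def prefix_pa_def
    using p0 p_end i by (intro CollectI exI[of _ p'] exI[of _ vs']) (auto simp: p'_def vsum_append_zeros)
qed

lemma prefix_pa_run_freezes:
  assumes run: "\<And>k. k < length u \<Longrightarrow> (q k, u ! k, vs k, q (Suc k)) \<in> prefix_pa_trans A"
    and "even (q 0)" and "odd (q (length u))"
  obtains i where "0 < i" "i \<le> length u" "\<forall>k < i. even (q k)" "q i div 2 \<in> pa_final A"
    and "map vs [i..<length u] = replicate (length u - i) (replicate (pa_dim A) 0)"
proof -
  define i where "i = (LEAST k. odd (q k))"
  have i: "odd (q i)" "i \<le> length u"
    using assms(3) unfolding i_def by (rule LeastI, rule Least_le)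
  have even_before: "\<forall>k < i. even (q k)"
    using not_less_Least unfolding i_def by blast
  obtain j where j: "i = Suc j"
    using i(1) assms(2) by (cases i) auto
  have odd_after: "odd (q k)" if "i \<le> k" "k \<le> length u" for k
    using that
  proof (induction k rule: dec_induct)
    case (step k)
    then show ?case using prefix_pa_transD(3)[OF run[of k]] by simp
  qed (use i in simp)
  have "vs k = replicate (pa_dim A) 0" if "i \<le> k" "k < length u" for k
    using prefix_pa_transD(3)[OF run[OF that(2)]] odd_after[of k] that by simp
  then have "map vs [i..<length u] = replicate (length u - i) (replicate (pa_dim A) 0)"
    by (intro nth_equalityI) simp_all
  moreover have "q i div 2 \<in> pa_final A"
    using prefix_pa_transD(4)[OF run[of j]] even_before i j by simp
  ultimately show thesis
    using that i(2) even_before j by blast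
qed

lemma pa_lang_subset_rpba_prefix_lang: "pa_lang (prefix_pa A f) \<subseteq> rpba_prefix_lang A f"
proof
  fix u assume "u \<in> pa_lang (prefix_pa A f)"
  then obtain q vs' where q0: "q 0 = 2 * pa_init A"
    and run: "\<And>k. k < length u \<Longrightarrow> (q k, u ! k, vs' k, q (Suc k)) \<in> prefix_pa_trans A"
    and q_end: "q (length u) = 2 * f + 1"
    and sum: "vsum (pa_dim A) (map vs' [0..<length u]) \<in> pa_constr A"
    unfolding pa_lang_def pa_accepts_def prefix_pa_def by auto
  obtain i where i: "0 < i" "i \<le> length u" "q i div 2 \<in> pa_final A"
    and even_before: "\<forall>k < i. even (q k)"
    and zero_after: "map vs' [i..<length u] = replicate (length u - i) (replicate (pa_dim A) 0)"
    using prefix_pa_run_freezes[OF run] q0 q_end by auto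
  have "\<exists>v. (q k div 2, u ! k, v, q (Suc k) div 2) \<in> pa_trans A" if "k < length u" for k
    using prefix_pa_transD(1)[OF run[OF that]] .
  then obtain ws where ws: "\<And>k. k < length u \<Longrightarrow> (q k div 2, u ! k, ws k, q (Suc k) div 2) \<in> pa_trans A"
    by metis
  define vs where "vs k = (if k < i then vs' k else ws k)" for k
  have "(q k div 2, u ! k, vs k, q (Suc k) div 2) \<in> pa_trans A" if "k < length u" for k
  proof (cases "k < i")
    case True
    then show ?thesis
      using prefix_pa_transD(2)[OF run[OF that]] even_before by (simp add: vs_def)
  qed (use ws[OF that] in \<open>simp add: vs_def\<close>)
  moreover have "vsum (pa_dim A) (map vs [0..<i]) \<in> pa_constr A"
  proof -
    have "map vs' [0..<length u] = map vs' [0..<i] @ map vs' [i..<length u]"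
      using i(2) by (simp add: map_upt_append)
    also have "\<dots> = map vs [0..<i] @ replicate (length u - i) (replicate (pa_dim A) 0)"
      by (simp add: vs_def zero_after)
    finally show ?thesis
      using sum by (simp only: vsum_append_zeros)
  qed
  ultimately show "u \<in> rpba_prefix_lang A f"
    unfolding rpba_prefix_lang_def using q0 q_end i
    by (intro CollectI exI[of _ "\<lambda>k. q k div 2"] exI[of _ vs] exI[of _ i]) simp
qed

lemma pa_lang_prefix_pa: "pa_lang (prefix_pa A f) = rpba_prefix_lang A f"
  using pa_lang_subset_rpba_prefix_lang rpba_prefix_lang_subset_pa_lang by blast

lemma parikh_recognizable_rpba_prefix_lang:
  "wf_pa A \<Longrightarrow> f \<in> pa_states A \<Longrightarrow> parikh_recognizable (rpba_prefix_lang A f)"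
  unfolding parikh_recognizable_def using wf_prefix_pa pa_lang_prefix_pa by metis

theorem lemma8:
  fixes L :: "('a :: finite) oword set"
  assumes "rpba_recognizable L"
  shows "\<exists>n (U :: nat \<Rightarrow> 'a list set) (V :: nat \<Rightarrow> 'a list set).
           (\<forall>i \<in> {1..n}. parikh_recognizable (U i) \<and> regular (V i)) \<and>
           L = (\<Union>i \<in> {1..n}. lang_conc (U i) (omega_iter (V i)))"
proof -
  obtain A :: "'a pa" where wf: "wf_pa A" and L: "rpba_lang A = L"
    using assms unfolding rpba_recognizable_def by blast
  have finals: "pa_final A \<subseteq> pa_states A" "finite (pa_final A)"
    using wf finite_subset unfolding wf_pa_def by blast+
  obtain n and h :: "nat \<Rightarrow> nat" where h: "bij_betw h {1..n} (pa_final A)"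
    using ex_bij_betw_nat_finite_1[OF finals(2)] by blast
  define U where "U i = rpba_prefix_lang A (h i)" for i
  define V where "V i = loop_lang (nfa_trans A) (h i)" for i
  have "parikh_recognizable (U i) \<and> regular (V i)" if "i \<in> {1..n}" for i
  proof -
    have "h i \<in> pa_states A"
      using bij_betw_apply[OF h that] finals(1) by blast
    then show ?thesis
      using wf by (simp add: U_def V_def parikh_recognizable_rpba_prefix_lang regular_loop_lang_nfa_trans)
  qed
  moreover have "L = (\<Union>i \<in> {1..n}. lang_conc (U i) (omega_iter (V i)))"
    unfolding U_def V_def L[symmetric] rpba_lang_decomposition[OF finals(2)]
      bij_betw_imp_surj_on[OF h, symmetric] by simp
  ultimately show ?thesis
    by (intro exI[of _ n]) (rule exI[of _ U], rule exI[of _ V], blast)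
qed

end
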